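(* Let $S\subseteq\Sigma^n$ be a double-MDS-code and let $\gamma$ be the number of connected components of $G(S)$ (equivalently, the number of prime double-codes contained in $S$). (a) If $G(S)$ is bipartite, then $S$ contains exactly $2^\gamma$ distinct subsets that are $(n,2)_4$ MDS codes. (b) If $G(S)$ is not bipartite, then $S$ contains no $(n,2)_4$ MDS code.
   Context: Let $\Sigma=\{0,1,2,3\}$. An $i$-line of $\Sigma^n$ is a set of the four words that agree in all coordinates except the $i$th; a line is an $i$-line for some $i$. An $(n,2)_4$ MDS code is a set meeting every line in exactly one element. A double-code is a set meeting every line in $0$ or $2$ elements; a double-MDS-code is a set meeting every line in exactly $2$ elements; a double-code is complementable if contained in a double-MDS-code, and prime if complementable, nonempty and not partitionable into two or more nonempty double-codes. The adjacency graph $G(S)$ has vertex set $S$, two vertices being adjacent iff they differ in exactly one coordinate. *)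

theory Defs
  imports Main
begin

definition Sigma :: "nat \<Rightarrow> nat list set" where
  "Sigma n = {w. length w = n \<and> set w \<subseteq> {0..<4}}"

definition line :: "nat list \<Rightarrow> nat \<Rightarrow> nat list set" where
  "line w i = {w[i := a] | a. a < 4}"

definition lines :: "nat \<Rightarrow> nat list set set" where
  "lines n = {line w i | w i. w \<in> Sigma n \<and> i < n}"

definition mds_code :: "nat \<Rightarrow> nat list set \<Rightarrow> bool" where
  "mds_code n C \<longleftrightarrow> C \<subseteq> Sigma n \<and> (\<forall>L \<in> lines n. card (L \<inter> C) = 1)"

definition double_mds_code :: "nat \<Rightarrow> nat list set \<Rightarrow> bool" where
  "double_mds_code n S \<longleftrightarrow> S \<subseteq> Sigma n \<and> (\<forall>L \<in> lines n. card (L \<inter> S) = 2)"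

definition adjacent :: "nat list \<Rightarrow> nat list \<Rightarrow> bool" where
  "adjacent u v \<longleftrightarrow> length u = length v \<and> card {i. i < length u \<and> u ! i \<noteq> v ! i} = 1"

definition adj_rel :: "nat list set \<Rightarrow> (nat list \<times> nat list) set" where
  "adj_rel S = {(u, v). u \<in> S \<and> v \<in> S \<and> adjacent u v}"

definition num_components :: "nat list set \<Rightarrow> nat" where
  "num_components S = card (S // ((adj_rel S)\<^sup>*))"

definition bipartite_graph :: "nat list set \<Rightarrow> bool" where
  "bipartite_graph S \<longleftrightarrow> (\<exists>f :: nat list \<Rightarrow> bool. \<forall>(u, v) \<in> adj_rel S. f u \<noteq> f v)"

end

theory Submission
  imports Defs
begin

(*
  A subset C of a double-MDS code S meets every line exactly once iff every edge of G(S) has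
  exactly one end in C: each line meets S in two words, which are adjacent, and every edge of
  G(S) lies on a line.  So the MDS subcodes of S are the colour classes of the proper
  2-colourings of G(S).  There are none unless G(S) is bipartite; otherwise, fixing one colour
  class C0, the map C |-> C - C0 \<union> C0 - C is a bijection onto the unions of connected
  components, of which there are 2 ^ \<gamma>.
*)

definition proper_2_colouring :: "('a \<times> 'a) set \<Rightarrow> 'a set \<Rightarrow> bool" where
  "proper_2_colouring E C \<longleftrightarrow> (\<forall>(u, v) \<in> E. (u \<in> C) \<noteq> (v \<in> C))"

(* For symmetric E \<subseteq> S \<times> S, the saturated subsets of S are the unions of components of E. *)
definition saturated :: "('a \<times> 'a) set \<Rightarrow> 'a set \<Rightarrow> bool" where
  "saturated E D \<longleftrightarrow> (\<forall>(u, v) \<in> E. u \<in> D \<longleftrightarrow> v \<in> D)"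

lemma saturated_Image_rtrancl_eq:
  assumes "saturated E D"
  shows "E\<^sup>* `` D = D"
  using assms by (intro Image_closed_trancl) (auto simp: saturated_def)

lemma card_saturated_subsets:
  assumes "finite S" and "E \<subseteq> S \<times> S" and "sym E"
  shows "card {D. D \<subseteq> S \<and> saturated E D} = 2 ^ card (S // E\<^sup>*)"
proof -
  have equiv: "equiv UNIV (E\<^sup>*)"
    using refl_rtrancl sym_rtrancl[OF \<open>sym E\<close>] trans_rtrancl by (rule equivI[rotated]) simp
  have "E\<^sup>* `` S = S"
    using \<open>E \<subseteq> S \<times> S\<close> by (intro Image_closed_trancl) blast
  then have class_subset: "X \<subseteq> S" if "X \<in> S // E\<^sup>*" for X
    using that by (auto elim!: quotientE)
  have class_saturated: "saturated E X" if "X \<in> S // E\<^sup>*" for X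
    using that \<open>sym E\<close>
    by (auto simp: saturated_def elim!: quotientE intro: rtrancl_into_rtrancl dest: symD)
  have Union_mono: "T \<subseteq> T'"
    if T: "T \<subseteq> S // E\<^sup>*" and T': "T' \<subseteq> S // E\<^sup>*" and "\<Union>T \<subseteq> \<Union>T'" for T T'
  proof
    fix X assume "X \<in> T"
    then obtain x where "x \<in> S" "X = E\<^sup>* `` {x}" using T by (auto elim!: quotientE)
    then have "x \<in> \<Union>T'" using \<open>X \<in> T\<close> \<open>\<Union>T \<subseteq> \<Union>T'\<close> by auto
    then obtain Y where "Y \<in> T'" "x \<in> Y" by blast
    moreover obtain y where "Y = E\<^sup>* `` {y}" using \<open>Y \<in> T'\<close> T' by (auto elim!: quotientE)
    ultimately have "Y = X"
      using equiv_class_eq[OF equiv] \<open>X = E\<^sup>* `` {x}\<close> by blast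
    then show "X \<in> T'" using \<open>Y \<in> T'\<close> by simp
  qed
  have "bij_betw Union (Pow (S // E\<^sup>*)) {D. D \<subseteq> S \<and> saturated E D}"
  proof (rule bij_betw_imageI)
    show "inj_on Union (Pow (S // E\<^sup>*))"
      by (rule inj_onI) (simp add: Union_mono subset_antisym)
    show "Union ` Pow (S // E\<^sup>*) = {D. D \<subseteq> S \<and> saturated E D}"
    proof (intro equalityI subsetI)
      fix D assume "D \<in> Union ` Pow (S // E\<^sup>*)"
      then show "D \<in> {D. D \<subseteq> S \<and> saturated E D}"
        using class_subset class_saturated by (fastforce simp: saturated_def)
    next
      fix D assume D: "D \<in> {D. D \<subseteq> S \<and> saturated E D}"
      then have "D = \<Union>((\<lambda>x. E\<^sup>* `` {x}) ` D)"
        using saturated_Image_rtrancl_eq by blast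
      moreover have "(\<lambda>x. E\<^sup>* `` {x}) ` D \<subseteq> S // E\<^sup>*"
        using D by (auto intro: quotientI)
      ultimately show "D \<in> Union ` Pow (S // E\<^sup>*)" by blast
    qed
  qed
  moreover have "finite (S // E\<^sup>*)"
    using \<open>finite S\<close> by (simp add: proj_image[symmetric])
  ultimately show ?thesis
    by (metis bij_betw_same_card card_Pow)
qed

lemma proper_2_colouring_iff_saturated_sym_diff:
  assumes "proper_2_colouring E C\<^sub>0"
  shows "proper_2_colouring E C \<longleftrightarrow> saturated E (sym_diff C C\<^sub>0)"
  using assms unfolding proper_2_colouring_def saturated_def by fast

lemma card_proper_2_colourings:
  assumes "finite S" and "E \<subseteq> S \<times> S" and "sym E"
    and "C\<^sub>0 \<subseteq> S" and "proper_2_colouring E C\<^sub>0"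
  shows "card {C. C \<subseteq> S \<and> proper_2_colouring E C} = 2 ^ card (S // E\<^sup>*)"
proof -
  have sym_diff_involution: "sym_diff (sym_diff A C\<^sub>0) C\<^sub>0 = A" for A :: "'a set"
    by blast
  have "bij_betw (\<lambda>C. sym_diff C C\<^sub>0)
      {C. C \<subseteq> S \<and> proper_2_colouring E C} {D. D \<subseteq> S \<and> saturated E D}"
    using \<open>C\<^sub>0 \<subseteq> S\<close> sym_diff_involution
      proper_2_colouring_iff_saturated_sym_diff[OF \<open>proper_2_colouring E C\<^sub>0\<close>]
    by (intro bij_betw_byWitness[where f' = "\<lambda>D. sym_diff D C\<^sub>0"]) auto
  then show ?thesis
    using card_saturated_subsets[OF assms(1-3)] by (simp add: bij_betw_same_card)
qed

lemma finite_Sigma: "finite (Sigma n)"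
  using finite_lists_length_eq[of "{0..<4::nat}" n] by (simp add: Sigma_def conj_commute)

lemma adjacent_sym: "adjacent u v \<longleftrightarrow> adjacent v u"
proof -
  have "{i. i < length u \<and> u ! i \<noteq> v ! i} = {i. i < length v \<and> v ! i \<noteq> u ! i}"
    if "length u = length v"
    using that by auto
  then show ?thesis
    unfolding adjacent_def by metis
qed

lemma sym_adj_rel: "sym (adj_rel S)"
  by (auto simp: sym_def adj_rel_def adjacent_sym)

lemma adj_rel_subset: "adj_rel S \<subseteq> S \<times> S"
  by (auto simp: adj_rel_def)

lemma adjacent_imp_neq: "adjacent u v \<Longrightarrow> u \<noteq> v"
  by (auto simp: adjacent_def)

lemma Sigma_nth_less: "w \<in> Sigma n \<Longrightarrow> i < n \<Longrightarrow> w ! i < 4"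
  by (auto simp: Sigma_def dest!: nth_mem)

lemma in_line_self:
  assumes "w \<in> Sigma n" and "i < n"
  shows "w \<in> line w i"
proof -
  have "w = w[i := w ! i]" and "w ! i < 4"
    using Sigma_nth_less[OF assms] by simp_all
  then show ?thesis
    unfolding line_def by blast
qed

lemma line_adjacent:
  assumes "i < length w" and "x \<in> line w i" and "y \<in> line w i" and "x \<noteq> y"
  shows "adjacent x y"
proof -
  obtain a b where x: "x = w[i := a]" and y: "y = w[i := b]"
    using assms(2,3) by (auto simp: line_def)
  with assms have "{j. j < length x \<and> x ! j \<noteq> y ! j} = {i}"
    by (auto simp: nth_list_update)
  with x y show ?thesis by (simp add: adjacent_def)
qed

lemma adjacent_imp_common_line:
  assumes "u \<in> Sigma n" and "v \<in> Sigma n" and "adjacent u v"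
  shows "\<exists>L \<in> lines n. u \<in> L \<and> v \<in> L"
proof -
  obtain i where i: "{j. j < length u \<and> u ! j \<noteq> v ! j} = {i}"
    using \<open>adjacent u v\<close> by (auto simp: adjacent_def card_1_singleton_iff)
  have len: "length u = n" "length v = n"
    using assms(1,2) by (auto simp: Sigma_def)
  then have "i < n"
    using i by auto
  have "u ! j = v ! j" if "j < n" and "j \<noteq> i" for j
    using i len that by blast
  then have "v = u[i := v ! i]"
    using len \<open>i < n\<close> by (intro nth_equalityI) (auto simp: nth_list_update)
  then have "v \<in> line u i"
    using Sigma_nth_less[OF \<open>v \<in> Sigma n\<close> \<open>i < n\<close>] unfolding line_def by blast
  moreover have "u \<in> line u i"
    using \<open>u \<in> Sigma n\<close> \<open>i < n\<close> by (rule in_line_self)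
  moreover have "line u i \<in> lines n"
    using \<open>u \<in> Sigma n\<close> \<open>i < n\<close> by (auto simp: lines_def)
  ultimately show ?thesis by blast
qed

lemma double_mds_code_line:
  assumes "double_mds_code n S" and "L \<in> lines n"
  obtains x y where "L \<inter> S = {x, y}" and "(x, y) \<in> adj_rel S"
proof -
  obtain x y where xy: "L \<inter> S = {x, y}" "x \<noteq> y"
    using assms by (auto simp: double_mds_code_def card_2_iff)
  obtain w i where "w \<in> Sigma n" "i < n" "L = line w i"
    using \<open>L \<in> lines n\<close> by (auto simp: lines_def)
  then have "adjacent x y"
    using xy by (intro line_adjacent[of i w]) (auto simp: Sigma_def)
  with xy show ?thesis
    by (intro that) (auto simp: adj_rel_def)
qed

lemma double_mds_code_edge:
  assumes "double_mds_code n S" and "(u, v) \<in> adj_rel S"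
  obtains L where "L \<in> lines n" and "L \<inter> S = {u, v}"
proof -
  have "u \<in> S" "v \<in> S" "adjacent u v"
    using \<open>(u, v) \<in> adj_rel S\<close> by (auto simp: adj_rel_def)
  moreover have "S \<subseteq> Sigma n"
    using assms(1) by (simp add: double_mds_code_def)
  ultimately obtain L where L: "L \<in> lines n" "u \<in> L" "v \<in> L"
    using adjacent_imp_common_line by blast
  then have "card {u, v} = card (L \<inter> S)"
    using assms(1) adjacent_imp_neq[OF \<open>adjacent u v\<close>] by (simp add: double_mds_code_def)
  moreover have "finite (L \<inter> S)"
    using \<open>S \<subseteq> Sigma n\<close> finite_Sigma by (simp add: finite_subset)
  moreover have "{u, v} \<subseteq> L \<inter> S"
    using L \<open>u \<in> S\<close> \<open>v \<in> S\<close> by blast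
  ultimately have "L \<inter> S = {u, v}"
    using card_subset_eq by blast
  with L show ?thesis by (intro that)
qed

lemma card_doubleton_Int_eq_1:
  "u \<noteq> v \<Longrightarrow> card ({u, v} \<inter> C) = 1 \<longleftrightarrow> (u \<in> C) \<noteq> (v \<in> C)"
  by (cases "u \<in> C"; cases "v \<in> C") auto

lemma mds_code_iff_proper_2_colouring:
  assumes "double_mds_code n S" and "C \<subseteq> S"
  shows "mds_code n C \<longleftrightarrow> proper_2_colouring (adj_rel S) C"
proof
  assume mds: "mds_code n C"
  have "(u \<in> C) \<noteq> (v \<in> C)" if edge: "(u, v) \<in> adj_rel S" for u v
  proof -
    obtain L where "L \<in> lines n" and "L \<inter> S = {u, v}"
      using double_mds_code_edge[OF assms(1) edge] .
    then have "L \<inter> C = {u, v} \<inter> C"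
      using \<open>C \<subseteq> S\<close> by blast
    moreover have "card (L \<inter> C) = 1"
      using mds \<open>L \<in> lines n\<close> by (simp add: mds_code_def)
    moreover have "u \<noteq> v"
      using edge adjacent_imp_neq by (auto simp: adj_rel_def)
    ultimately show ?thesis
      using card_doubleton_Int_eq_1 by metis
  qed
  then show "proper_2_colouring (adj_rel S) C"
    by (auto simp: proper_2_colouring_def)
next
  assume colouring: "proper_2_colouring (adj_rel S) C"
  have "card (L \<inter> C) = 1" if L: "L \<in> lines n" for L
  proof -
    obtain x y where "L \<inter> S = {x, y}" and edge: "(x, y) \<in> adj_rel S"
      using double_mds_code_line[OF assms(1) L] .
    then have "L \<inter> C = {x, y} \<inter> C"
      using \<open>C \<subseteq> S\<close> by blast
    moreover have "x \<noteq> y"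
      using edge adjacent_imp_neq by (auto simp: adj_rel_def)
    moreover have "(x \<in> C) \<noteq> (y \<in> C)"
      using colouring edge by (auto simp: proper_2_colouring_def)
    ultimately show ?thesis
      using card_doubleton_Int_eq_1 by metis
  qed
  with assms show "mds_code n C"
    by (auto simp: mds_code_def double_mds_code_def)
qed

lemma bipartite_graph_iff_proper_2_colouring:
  "bipartite_graph S \<longleftrightarrow> (\<exists>C \<subseteq> S. proper_2_colouring (adj_rel S) C)"
proof
  assume "bipartite_graph S"
  then obtain f :: "nat list \<Rightarrow> bool" where "\<forall>(u, v) \<in> adj_rel S. f u \<noteq> f v"
    by (auto simp: bipartite_graph_def)
  then have "proper_2_colouring (adj_rel S) {u \<in> S. f u}"
    by (auto simp: proper_2_colouring_def adj_rel_def)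
  then show "\<exists>C \<subseteq> S. proper_2_colouring (adj_rel S) C"
    by (intro exI[of _ "{u \<in> S. f u}"]) simp
next
  assume "\<exists>C \<subseteq> S. proper_2_colouring (adj_rel S) C"
  then obtain C where "proper_2_colouring (adj_rel S) C"
    by blast
  then show "bipartite_graph S"
    unfolding bipartite_graph_def proper_2_colouring_def by (intro exI[of _ "\<lambda>u. u \<in> C"])
qed

theorem proposition5:
  fixes n :: nat and S :: "nat list set"
  assumes "double_mds_code n S"
  shows "(bipartite_graph S \<longrightarrow>
           card {C. C \<subseteq> S \<and> mds_code n C} = 2 ^ num_components S)
       \<and> (\<not> bipartite_graph S \<longrightarrow> \<not> (\<exists>C. C \<subseteq> S \<and> mds_code n C))"
proof -
  have "S \<subseteq> Sigma n"
    using assms by (simp add: double_mds_code_def)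
  then have "finite S"
    using finite_Sigma by (rule finite_subset)
  have mds_subcodes:
    "{C. C \<subseteq> S \<and> mds_code n C} = {C. C \<subseteq> S \<and> proper_2_colouring (adj_rel S) C}"
    using mds_code_iff_proper_2_colouring[OF assms] by blast
  show ?thesis
  proof (intro conjI impI)
    assume "bipartite_graph S"
    then obtain C\<^sub>0 where "C\<^sub>0 \<subseteq> S" and "proper_2_colouring (adj_rel S) C\<^sub>0"
      by (auto simp: bipartite_graph_iff_proper_2_colouring)
    then show "card {C. C \<subseteq> S \<and> mds_code n C} = 2 ^ num_components S"
      unfolding mds_subcodes num_components_def
      by (rule card_proper_2_colourings[OF \<open>finite S\<close> adj_rel_subset sym_adj_rel])
  next
    assume "\<not> bipartite_graph S"
    then show "\<not> (\<exists>C. C \<subseteq> S \<and> mds_code n C)"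
      using mds_subcodes bipartite_graph_iff_proper_2_colouring by blast
  qed
qed

end
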